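(* Let $R_4=\{a_1,a_2,b_1,b_2\}$ be the topological quandle with operations $a_i\triangleright a_j=a_i$, $b_i\triangleright b_j=b_i$, $a_i\triangleright b_j=a_{i+1}$, $b_i\triangleright a_j=b_{i+1}$, where subscripts are taken mod 2 so that $2+1$ means $1$. (This is the dihedral quandle of four elements.) Give $R_4$ the topology $\{\emptyset,\{a_1,a_2\},\{b_1,b_2\},R_4\}$. Then the first cohomology group $\bar{H}^{1}_{Q}(R_{4})=\mathbb{Z}^{4}$.
   Context: Setting: For a topological quandle $X$, $C_n(X)$ is the free abelian group generated by the singular $n$-simplices $\sigma:\Delta^n\to X$. We write $\sigma_{[x_1,\dots,x_{n+1}]}$ for a simplex whose $i$-th vertex maps to $x_i$. The boundary map is $\partial_n(\sigma_{[x_1,\dots,x_{n+1}]})=\sum_{i=2}^{n+1}(-1)^i(\sigma_{[x_1,\dots,\hat{x_i},\dots,x_{n+1}]}-\sigma_{[x_1\triangleright x_i,\dots,x_{i-1}\triangleright x_i,\hat{x_i},\dots,x_{n+1}]})$. $\bar{C}^R_n(X)$ is the quotient of $C_n(X)$ that identifies two $n$-simplices whenever they have the same vertices. $\bar{C}^D_n(X)$ is the subcomplex generated by the simplices $\sigma_{[x_1,\dots,x_{n+1}]}$ with $x_i=x_{i+1}$ for some $i$, for $n\ge1$; it is $0$ for $n=0$. Then $\bar{C}^Q_n(X)=\bar{C}^R_n(X)/\bar{C}^D_n(X)$. The group $\bar{H}^n_Q(X)$ is the $n$-th cohomology of $\mathrm{Hom}(\bar{C}^Q_*(X),\mathbb{Z})$.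 *)

theory Defs
  imports "HOL-Homology.Homology" "HOL-Algebra.Free_Abelian_Groups"
begin

definition simplex_vertex :: "nat \<Rightarrow> (nat \<Rightarrow> real)" where
  "simplex_vertex i = (\<lambda>j. if j = i then 1 else 0)"

definition vertex_tuple :: "nat \<Rightarrow> ((nat \<Rightarrow> real) \<Rightarrow> 'a) \<Rightarrow> 'a list" where
  "vertex_tuple n \<sigma> = map (\<lambda>i. \<sigma> (simplex_vertex i)) [0..<Suc n]"

text \<open>Generators of the quotient of C_n(X) identifying simplices with the same vertices:
  the vertex tuples of singular n-simplices.\<close>
definition RGen :: "nat \<Rightarrow> 'a topology \<Rightarrow> 'a list set" where
  "RGen n X = {vertex_tuple n \<sigma> | \<sigma>. singular_simplex n X \<sigma>}"

definition degenerate_tuple :: "'a list \<Rightarrow> bool" where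
  "degenerate_tuple xs \<longleftrightarrow> (\<exists>i. Suc i < length xs \<and> xs ! i = xs ! Suc i)"

definition QGen :: "nat \<Rightarrow> 'a topology \<Rightarrow> 'a list set" where
  "QGen n X = {xs \<in> RGen n X. \<not> degenerate_tuple xs}"

text \<open>Hom of the free abelian group on QGen n X into Z = integer functions on the basis
  (extended by 0 outside).\<close>
definition QCochain :: "nat \<Rightarrow> 'a topology \<Rightarrow> ('a list \<Rightarrow> int) set" where
  "QCochain n X = {f. \<forall>xs. xs \<notin> QGen n X \<longrightarrow> f xs = 0}"

text \<open>Coboundary delta^n f = f o boundary_{n+1}, with the boundary map of the paper
  (paper index i = 2..n+2 corresponds to 0-based j = i-1 = 1..n+1).\<close>
definition qcobd :: "nat \<Rightarrow> 'a topology \<Rightarrow> ('a \<Rightarrow> 'a \<Rightarrow> 'a) \<Rightarrow> ('a list \<Rightarrow> int) \<Rightarrow> ('a list \<Rightarrow> int)" where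
  "qcobd n X op f = (\<lambda>xs. if xs \<in> QGen (Suc n) X then
      (\<Sum>j\<in>{1..Suc n}. (-1) ^ (Suc j) *
         (f (take j xs @ drop (Suc j) xs)
          - f (map (\<lambda>x. op x (xs ! j)) (take j xs) @ drop (Suc j) xs)))
     else 0)"

definition QCocycles :: "nat \<Rightarrow> 'a topology \<Rightarrow> ('a \<Rightarrow> 'a \<Rightarrow> 'a) \<Rightarrow> ('a list \<Rightarrow> int) set" where
  "QCocycles n X op = {f \<in> QCochain n X. qcobd n X op f = (\<lambda>_. 0)}"

definition QCoboundaries :: "nat \<Rightarrow> 'a topology \<Rightarrow> ('a \<Rightarrow> 'a \<Rightarrow> 'a) \<Rightarrow> ('a list \<Rightarrow> int) set" where
  "QCoboundaries n X op =
     (if n = 0 then {\<lambda>_. 0} else qcobd (n - 1) X op ` QCochain (n - 1) X)"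

definition cocycle_group :: "nat \<Rightarrow> 'a topology \<Rightarrow> ('a \<Rightarrow> 'a \<Rightarrow> 'a) \<Rightarrow> ('a list \<Rightarrow> int) monoid" where
  "cocycle_group n X op = \<lparr>carrier = QCocycles n X op, monoid.mult = (\<lambda>f g xs. f xs + g xs),
                           one = (\<lambda>_. 0)\<rparr>"

definition quandle_cohomology :: "nat \<Rightarrow> 'a topology \<Rightarrow> ('a \<Rightarrow> 'a \<Rightarrow> 'a) \<Rightarrow> ('a list \<Rightarrow> int) set monoid" where
  "quandle_cohomology n X op = cocycle_group n X op Mod QCoboundaries n X op"

datatype r4 = A1 | A2 | B1 | B2

fun r4_op :: "r4 \<Rightarrow> r4 \<Rightarrow> r4" where
  "r4_op A1 A1 = A1" | "r4_op A1 A2 = A1" | "r4_op A2 A1 = A2" | "r4_op A2 A2 = A2"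
| "r4_op B1 B1 = B1" | "r4_op B1 B2 = B1" | "r4_op B2 B1 = B2" | "r4_op B2 B2 = B2"
| "r4_op A1 B1 = A2" | "r4_op A1 B2 = A2" | "r4_op A2 B1 = A1" | "r4_op A2 B2 = A1"
| "r4_op B1 A1 = B2" | "r4_op B1 A2 = B2" | "r4_op B2 A1 = B1" | "r4_op B2 A2 = B1"

definition R4_top :: "r4 topology" where
  "R4_top = topology (\<lambda>U. U \<in> {{}, {A1, A2}, {B1, B2}, UNIV})"

end

theory Submission
  imports Defs "HOL-Analysis.Abstract_Topological_Spaces"
begin

(* The sets {a_1, a_2} and {b_1, b_2} are clopen in R_4 and a singular simplex has connected
   image, so all vertices of a simplex lie in one of these two blocks. Inside a block the
   quandle operation is trivial (x acting on y gives x), so every term of the coboundary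
   vanishes: all cochains are cocycles and all coboundaries are zero. Hence H^1_Q is the group
   of integer functions on the nondegenerate 1-simplices, which are exactly the four pairs
   (a_1,a_2), (a_2,a_1), (b_1,b_2), (b_2,b_1); each of them is realised by a singular 1-simplex
   because its two points are topologically indistinguishable. *)

lemma simplex_vertex_in_standard_simplex: "i \<le> n \<Longrightarrow> simplex_vertex i \<in> standard_simplex n"
  unfolding simplex_vertex_def standard_simplex_def by auto

lemma length_RGen: "xs \<in> RGen n X \<Longrightarrow> length xs = Suc n"
  by (auto simp: RGen_def vertex_tuple_def)

lemma RGen_clopen_cases:
  assumes "xs \<in> RGen n X" "closedin X C" "openin X C"
  shows "set xs \<subseteq> C \<or> disjnt (set xs) C"
proof -
  obtain \<sigma> where \<sigma>: "singular_simplex n X \<sigma>" and xs: "xs = vertex_tuple n \<sigma>"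
    using assms(1) by (auto simp: RGen_def)
  have "connectedin X (\<sigma> ` standard_simplex n)"
    using \<sigma> connectedin_continuous_map_image connectedin_standard_simplex
    by (fastforce simp: singular_simplex_def connectedin_subtopology)
  then have "\<sigma> ` standard_simplex n \<subseteq> C \<or> disjnt (\<sigma> ` standard_simplex n) C"
    using assms(2,3) by (rule connectedin_clopen_cases)
  moreover have "set xs \<subseteq> \<sigma> ` standard_simplex n"
    by (auto simp: xs vertex_tuple_def simplex_vertex_in_standard_simplex)
  ultimately show ?thesis
    by (meson disjnt_subset1 subset_trans)
qed

lemma RGen_1_if_indistinguishable:
  assumes "x \<in> topspace X" "y \<in> topspace X" and indist: "\<And>U. openin X U \<Longrightarrow> x \<in> U \<longleftrightarrow> y \<in> U"
  shows "[x, y] \<in> RGen 1 X"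
proof -
  define \<sigma> where "\<sigma> = restrict (\<lambda>p. if p 0 = 1 then x else y) (standard_simplex 1)"
  let ?S = "subtopology (powertop_real UNIV) (standard_simplex 1)"
  have "continuous_map ?S X \<sigma>"
    unfolding continuous_map_def
  proof (intro conjI allI impI)
    show "\<sigma> \<in> topspace ?S \<rightarrow> topspace X"
      using assms(1,2) by (simp add: \<sigma>_def)
    fix U assume "openin X U"
    then have "{p \<in> topspace ?S. \<sigma> p \<in> U} = {} \<or> {p \<in> topspace ?S. \<sigma> p \<in> U} = topspace ?S"
      using indist by (auto simp: \<sigma>_def)
    then show "openin ?S {p \<in> topspace ?S. \<sigma> p \<in> U}"
      by (elim disjE) (simp_all only: openin_empty openin_topspace)
  qed
  then have "singular_simplex 1 X \<sigma>"
    by (simp add: singular_simplex_def \<sigma>_def)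
  moreover have "vertex_tuple 1 \<sigma> = [x, y]"
    by (simp add: vertex_tuple_def \<sigma>_def simplex_vertex_in_standard_simplex)
      (simp add: simplex_vertex_def)
  ultimately show ?thesis
    unfolding RGen_def by (metis (mono_tags, lifting) mem_Collect_eq)
qed

lemma degenerate_tuple_pair [simp]: "degenerate_tuple [x, y] \<longleftrightarrow> x = y"
  by (auto simp: degenerate_tuple_def less_Suc_eq)

lemma qcobd_add:
  "qcobd n X op (\<lambda>xs. f xs + g xs) = (\<lambda>xs. qcobd n X op f xs + qcobd n X op g xs)"
  by (auto simp: qcobd_def algebra_simps sum.distrib[symmetric] intro!: sum.cong)

lemma qcobd_uminus: "qcobd n X op (\<lambda>xs. - f xs) = (\<lambda>xs. - qcobd n X op f xs)"
  unfolding qcobd_def by (rule ext) (simp flip: sum_negf add: algebra_simps del: sum.cl_ivl_Suc)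

lemma qcobd_zero: "qcobd n X op (\<lambda>_. 0) = (\<lambda>_. 0)"
  by (simp add: qcobd_def fun_eq_iff)

lemma group_cocycle_group: "group (cocycle_group n X op)"
proof (rule groupI)
  let ?G = "cocycle_group n X op"
  fix f g h
  show "\<one>\<^bsub>?G\<^esub> \<in> carrier ?G"
    by (simp add: cocycle_group_def QCocycles_def QCochain_def qcobd_zero)
  show "f \<otimes>\<^bsub>?G\<^esub> g \<in> carrier ?G" if "f \<in> carrier ?G" "g \<in> carrier ?G"
    using that by (simp add: cocycle_group_def QCocycles_def QCochain_def qcobd_add)
  show "f \<otimes>\<^bsub>?G\<^esub> g \<otimes>\<^bsub>?G\<^esub> h = f \<otimes>\<^bsub>?G\<^esub> (g \<otimes>\<^bsub>?G\<^esub> h)"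
    by (simp add: cocycle_group_def add.assoc)
  show "\<one>\<^bsub>?G\<^esub> \<otimes>\<^bsub>?G\<^esub> f = f"
    by (simp add: cocycle_group_def)
  show "\<exists>g\<in>carrier ?G. g \<otimes>\<^bsub>?G\<^esub> f = \<one>\<^bsub>?G\<^esub>" if "f \<in> carrier ?G"
    using that
    by (intro bexI[of _ "\<lambda>xs. - f xs"])
      (auto simp: cocycle_group_def QCocycles_def QCochain_def qcobd_uminus fun_eq_iff)
qed

lemma quandle_cohomology_iso_cocycle_group:
  assumes "QCoboundaries n X op = {\<lambda>_. 0}"
  shows "quandle_cohomology n X op \<cong> cocycle_group n X op"
proof -
  have "quandle_cohomology n X op = cocycle_group n X op Mod {\<one>\<^bsub>cocycle_group n X op\<^esub>}"
    by (simp add: quandle_cohomology_def assms cocycle_group_def)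
  then show ?thesis
    using group.trivial_factor_iso[OF group_cocycle_group] is_isoI by metis
qed

lemma QCoboundaries_Suc_eq_zero:
  assumes "\<And>f. qcobd n X op f = (\<lambda>_. 0)"
  shows "QCoboundaries (Suc n) X op = {\<lambda>_. 0}"
proof -
  have "(\<lambda>_. 0) \<in> QCochain n X"
    by (simp add: QCochain_def)
  then show ?thesis
    by (auto simp: QCoboundaries_def assms)
qed

lemma lookup_iso_cocycle_group:
  assumes "finite (QGen n X)" and "QCocycles n X op = QCochain n X"
  shows "Poly_Mapping.lookup \<in> iso (free_Abelian_group (QGen n X)) (cocycle_group n X op)"
proof (rule isoI)
  let ?F = "free_Abelian_group (QGen n X)" and ?G = "cocycle_group n X op"
  have carrier_G: "carrier ?G = QCochain n X"
    by (simp add: cocycle_group_def assms(2))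
  have mult_G: "f \<otimes>\<^bsub>?G\<^esub> g = (\<lambda>xs. f xs + g xs)" for f g
    by (simp add: cocycle_group_def)
  have lookup_QCochain: "Poly_Mapping.lookup p \<in> QCochain n X" if "p \<in> carrier ?F" for p
    using that by (auto simp: QCochain_def in_keys_iff)
  show "Poly_Mapping.lookup \<in> hom ?F ?G"
    using lookup_QCochain
    by (auto simp: hom_def carrier_G mult_G lookup_add)
  have "QCochain n X \<subseteq> Poly_Mapping.lookup ` carrier ?F"
  proof
    fix f assume f: "f \<in> QCochain n X"
    then have support: "{xs. f xs \<noteq> 0} \<subseteq> QGen n X"
      by (auto simp: QCochain_def)
    then have "finite {xs. f xs \<noteq> 0}"
      using assms(1) finite_subset by blast
    then have lookup_Abs: "Poly_Mapping.lookup (Abs_poly_mapping f) = f"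
      by simp
    moreover have "Abs_poly_mapping f \<in> carrier ?F"
      using support by (auto simp: in_keys_iff lookup_Abs)
    ultimately show "f \<in> Poly_Mapping.lookup ` carrier ?F"
      by (metis image_eqI)
  qed
  then show "bij_betw Poly_Mapping.lookup (carrier ?F) (carrier ?G)"
    using lookup_QCochain
    by (auto simp: bij_betw_def carrier_G inj_on_def poly_mapping_eqI)
qed

lemma qcobd_eq_zero_if_trivial_action:
  assumes "\<And>xs x y. xs \<in> QGen (Suc n) X \<Longrightarrow> x \<in> set xs \<Longrightarrow> y \<in> set xs \<Longrightarrow> op x y = x"
  shows "qcobd n X op f = (\<lambda>_. 0)"
proof
  fix xs
  show "qcobd n X op f xs = 0"
  proof (cases "xs \<in> QGen (Suc n) X")
    case True
    have "map (\<lambda>x. op x (xs ! j)) (take j xs) = take j xs" if "j \<in> {1..Suc n}" for j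
    proof -
      have "j < length xs"
        using that True length_RGen[of xs "Suc n" X] by (simp add: QGen_def)
      then have "xs ! j \<in> set xs"
        by (rule nth_mem)
      then show ?thesis
        using assms[OF True] by (auto intro!: map_idI dest: in_set_takeD)
    qed
    then show ?thesis
      by (simp add: qcobd_def)
  next
    case False
    then show ?thesis
      by (simp add: qcobd_def)
  qed
qed

lemma UNIV_r4: "UNIV = {A1, A2, B1, B2}"
  using r4.exhaust by blast

lemma openin_R4_top: "openin R4_top U \<longleftrightarrow> (A1 \<in> U \<longleftrightarrow> A2 \<in> U) \<and> (B1 \<in> U \<longleftrightarrow> B2 \<in> U)"
proof -
  have saturated_iff:
    "U \<in> {{}, {A1, A2}, {B1, B2}, UNIV} \<longleftrightarrow> (A1 \<in> U \<longleftrightarrow> A2 \<in> U) \<and> (B1 \<in> U \<longleftrightarrow> B2 \<in> U)" for U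
  proof
    assume "(A1 \<in> U \<longleftrightarrow> A2 \<in> U) \<and> (B1 \<in> U \<longleftrightarrow> B2 \<in> U)"
    moreover have "U = U \<inter> {A1, A2, B1, B2}"
      by (simp flip: UNIV_r4)
    ultimately show "U \<in> {{}, {A1, A2}, {B1, B2}, UNIV}"
      by (cases "A1 \<in> U"; cases "B1 \<in> U") (simp_all add: Int_insert_right UNIV_r4)
  qed auto
  have R4_top_eq: "R4_top = topology (\<lambda>U. (A1 \<in> U \<longleftrightarrow> A2 \<in> U) \<and> (B1 \<in> U \<longleftrightarrow> B2 \<in> U))"
    unfolding R4_top_def saturated_iff ..
  have "istopology (\<lambda>U. (A1 \<in> U \<longleftrightarrow> A2 \<in> U) \<and> (B1 \<in> U \<longleftrightarrow> B2 \<in> U))"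
    unfolding istopology_def by blast
  then show ?thesis
    unfolding R4_top_eq by simp
qed

lemma topspace_R4_top [simp]: "topspace R4_top = UNIV"
  using openin_subset[of R4_top UNIV] by (simp add: openin_R4_top top.extremum_unique)

lemma RGen_R4_top_components:
  assumes "xs \<in> RGen n R4_top"
  shows "set xs \<subseteq> {A1, A2} \<or> set xs \<subseteq> {B1, B2}"
proof -
  have "closedin R4_top {A1, A2}" "openin R4_top {A1, A2}"
    by (auto simp: closedin_def openin_R4_top)
  then have "set xs \<subseteq> {A1, A2} \<or> disjnt (set xs) {A1, A2}"
    using assms RGen_clopen_cases by blast
  then show ?thesis
    by (auto simp: disjnt_iff) (metis r4.exhaust)
qed

lemma r4_op_trivial_on_components:
  "{x, y} \<subseteq> {A1, A2} \<or> {x, y} \<subseteq> {B1, B2} \<Longrightarrow> r4_op x y = x"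
  by (cases x; cases y) auto

lemma qcobd_R4_top_eq_zero: "qcobd n R4_top r4_op f = (\<lambda>_. 0)"
proof (rule qcobd_eq_zero_if_trivial_action)
  fix xs x y assume "xs \<in> QGen (Suc n) R4_top" "x \<in> set xs" "y \<in> set xs"
  then have "{x, y} \<subseteq> {A1, A2} \<or> {x, y} \<subseteq> {B1, B2}"
    using RGen_R4_top_components by (fastforce simp: QGen_def)
  then show "r4_op x y = x"
    by (rule r4_op_trivial_on_components)
qed

lemma QGen_1_R4_top: "QGen 1 R4_top = {[A1, A2], [A2, A1], [B1, B2], [B2, B1]}"
proof
  show "QGen 1 R4_top \<subseteq> {[A1, A2], [A2, A1], [B1, B2], [B2, B1]}"
  proof
    fix xs assume xs: "xs \<in> QGen 1 R4_top"
    then obtain x y where "xs = [x, y]"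
      using length_RGen[of xs 1 R4_top] by (auto simp: QGen_def length_Suc_conv)
    moreover have "x \<noteq> y" and "{x, y} \<subseteq> {A1, A2} \<or> {x, y} \<subseteq> {B1, B2}"
      using xs RGen_R4_top_components[of xs 1] by (auto simp: QGen_def \<open>xs = [x, y]\<close>)
    ultimately show "xs \<in> {[A1, A2], [A2, A1], [B1, B2], [B2, B1]}"
      by (cases x; cases y) auto
  qed
  have "[x, y] \<in> QGen 1 R4_top" if "x \<noteq> y" and "{x, y} \<subseteq> {A1, A2} \<or> {x, y} \<subseteq> {B1, B2}" for x y
  proof -
    have "x \<in> U \<longleftrightarrow> y \<in> U" if "openin R4_top U" for U
      using that \<open>{x, y} \<subseteq> {A1, A2} \<or> {x, y} \<subseteq> {B1, B2}\<close> by (auto simp: openin_R4_top)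
    then show ?thesis
      using \<open>x \<noteq> y\<close> RGen_1_if_indistinguishable[of x R4_top y] by (simp add: QGen_def)
  qed
  then show "{[A1, A2], [A2, A1], [B1, B2], [B2, B1]} \<subseteq> QGen 1 R4_top"
    by simp
qed

theorem mainTheorem17:
  shows "quandle_cohomology 1 R4_top r4_op \<cong> free_Abelian_group {..<(4::nat)}"
proof -
  note iso_trans [trans]
  have "quandle_cohomology 1 R4_top r4_op \<cong> cocycle_group 1 R4_top r4_op"
    using QCoboundaries_Suc_eq_zero[OF qcobd_R4_top_eq_zero]
    by (intro quandle_cohomology_iso_cocycle_group) simp
  also have "\<dots> \<cong> free_Abelian_group (QGen 1 R4_top)"
  proof -
    have "finite (QGen 1 R4_top)"
      unfolding QGen_1_R4_top by simp
    moreover have "QCocycles 1 R4_top r4_op = QCochain 1 R4_top"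
      by (simp add: QCocycles_def qcobd_R4_top_eq_zero)
    ultimately have "free_Abelian_group (QGen 1 R4_top) \<cong> cocycle_group 1 R4_top r4_op"
      by (rule is_isoI[OF lookup_iso_cocycle_group])
    then show ?thesis
      by (simp add: group.iso_sym)
  qed
  also have "\<dots> \<cong> free_Abelian_group {..<(4::nat)}"
    unfolding QGen_1_R4_top by (simp add: isomorphic_free_Abelian_groups eqpoll_iff_finite_card)
  finally show ?thesis .
qed

end
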